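(* Let $n\ge1$, $\kappa_i,\theta_i,\sigma_i>0$ for $i=1,\dots,n$, and $\nu_i:=2\kappa_i\theta_i/\sigma_i^2$. Let $\pi_{\underline\nu}$ be the probability measure on $\mathbb R_+^n$ with density $\pi_{\underline\nu}(x)=\prod_{i=1}^n N_i\,x_i^{\nu_i-1}e^{-\nu_i x_i/\theta_i}$, $N_i=(\nu_i/\theta_i)^{\nu_i}/\Gamma(\nu_i)$ (a product of Gamma distributions). Consider the Dirichlet form associated with the generator $Lf(x)=\sum_{i=1}^n\big[\tfrac12\sigma_i^2x_i\partial_{x_ix_i}f(x)+\kappa_i(\theta_i-x_i)\partial_{x_i}f(x)\big]$ of $n$ independent CIR processes, namely $$D(f)=-\int f\,Lf\,d\pi_{\underline\nu}=\frac12\sum_{i=1}^n\sigma_i^2\int_{\mathbb R_+^n}x_i\,[\partial_{x_i}f(x)]^2\,d\pi_{\underline\nu}(x).$$ If $\sum_{i=1}^n\nu_i\ge 1$, then the origin $\{0\}$ is polar for this Dirichlet form.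
   Context: The generator $L$ acts on smooth functions $f$ on $\mathbb R_+^n$ with $\partial_{x_i}f(x)=0$ whenever $x_i=0$; $D$ is understood as the closure of the form defined on such functions, with domain $\mathcal D$. For $c>0$ set $D_c(f)=D(f)+c\int f^2\,d\pi_{\underline\nu}$. The capacity of an open set $\mathcal O\subset\mathbb R_+^n$ is $\mathrm{cap}(\mathcal O)=\inf\{D_1(f): f\in\mathcal D,\ f\ge1 \text{ on }\mathcal O\}$, and for an arbitrary set $B$, $\mathrm{cap}(B)=\inf\{\mathrm{cap}(\mathcal O):\mathcal O\supset B \text{ open}\}$. A set is polar if it has zero capacity (equivalently zero capacity with respect to $D_c$ for any $c>0$). *)

theory Defs
  imports "HOL-Analysis.Analysis" "HOL-Probability.Probability"
begin

definition Rplus :: "(real ^ 'n) set" where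
  "Rplus = {x. \<forall>i. 0 \<le> x $ i}"

definition pderiv_i :: "(real ^ 'n \<Rightarrow> real) \<Rightarrow> 'n \<Rightarrow> real ^ 'n \<Rightarrow> real" where
  "pderiv_i g i x = frechet_derivative g (at x) (axis i 1)"

fun Ck :: "nat \<Rightarrow> (real ^ 'n \<Rightarrow> real) \<Rightarrow> bool" where
  "Ck 0 g = continuous_on UNIV g"
| "Ck (Suc k) g = ((\<forall>x. g differentiable (at x)) \<and> continuous_on UNIV g
                    \<and> (\<forall>i. Ck k (\<lambda>x. pderiv_i g i x)))"

definition smooth :: "(real ^ 'n \<Rightarrow> real) \<Rightarrow> bool" where
  "smooth g = (\<forall>k. Ck k g)"

text \<open>Test functions: restrictions to R_+^n of compactly supported smooth functions
  on R^n satisfying the Neumann condition d_i f(x) = 0 whenever x_i = 0.\<close>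
definition test_fun :: "(real ^ 'n \<Rightarrow> real) \<Rightarrow> bool" where
  "test_fun g = (smooth g \<and> bounded {x. g x \<noteq> 0}
     \<and> (\<forall>x\<in>Rplus. \<forall>i. x $ i = 0 \<longrightarrow> pderiv_i g i x = 0))"

definition nu :: "('n \<Rightarrow> real) \<Rightarrow> ('n \<Rightarrow> real) \<Rightarrow> ('n \<Rightarrow> real) \<Rightarrow> 'n \<Rightarrow> real" where
  "nu \<kappa> \<theta> \<sigma> i = 2 * \<kappa> i * \<theta> i / (\<sigma> i)^2"

definition gamma_prod :: "('n::finite \<Rightarrow> real) \<Rightarrow> ('n \<Rightarrow> real) \<Rightarrow> (real ^ 'n) measure" where
  "gamma_prod \<nu> \<theta> = density lborel (\<lambda>x. ennreal (indicator Rplus x *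
      (\<Prod>i\<in>UNIV. ((\<nu> i / \<theta> i) powr \<nu> i / Gamma (\<nu> i))
                  * (x $ i) powr (\<nu> i - 1) * exp (- \<nu> i * x $ i / \<theta> i))))"

definition CIR_form :: "('n::finite \<Rightarrow> real) \<Rightarrow> ('n \<Rightarrow> real) \<Rightarrow> ('n \<Rightarrow> real)
    \<Rightarrow> (real ^ 'n \<Rightarrow> real) \<Rightarrow> real" where
  "CIR_form \<kappa> \<theta> \<sigma> g = 1/2 * (\<Sum>i\<in>UNIV. (\<sigma> i)^2 *
      integral\<^sup>L (gamma_prod (nu \<kappa> \<theta> \<sigma>) \<theta>) (\<lambda>x. x $ i * (pderiv_i g i x)^2))"

text \<open>Capacity (w.r.t. D_1 of the closure of the form) of a relatively open set O of R_+^n: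
  infimum of D_1(f) = lim (D(g_k) + int g_k^2) over f in the domain of the closure,
  given through approximating test-function sequences g_k that converge to f in L^2(pi)
  and are D-Cauchy, with f \<ge> 1 pi-a.e. on O.\<close>
definition cap_open :: "('n::finite \<Rightarrow> real) \<Rightarrow> ('n \<Rightarrow> real) \<Rightarrow> ('n \<Rightarrow> real)
    \<Rightarrow> (real ^ 'n) set \<Rightarrow> ereal" where
  "cap_open \<kappa> \<theta> \<sigma> U = (let \<pi> = gamma_prod (nu \<kappa> \<theta> \<sigma>) \<theta>; D = CIR_form \<kappa> \<theta> \<sigma> in
     Inf {ereal c | c. \<exists>g f. (\<forall>k. test_fun (g k))
        \<and> f \<in> borel_measurable \<pi> \<and> integrable \<pi> (\<lambda>x. (f x)^2)
        \<and> (\<lambda>k. integral\<^sup>L \<pi> (\<lambda>x. (g k x - f x)^2)) \<longlonglongrightarrow> 0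
        \<and> (\<forall>\<epsilon>>0. \<exists>N. \<forall>k\<ge>N. \<forall>m\<ge>N. D (\<lambda>x. g k x - g m x) < \<epsilon>)
        \<and> (\<lambda>k. D (g k) + integral\<^sup>L \<pi> (\<lambda>x. (g k x)^2)) \<longlonglongrightarrow> c
        \<and> (AE x in \<pi>. x \<in> U \<longrightarrow> 1 \<le> f x)})"

definition cap :: "('n::finite \<Rightarrow> real) \<Rightarrow> ('n \<Rightarrow> real) \<Rightarrow> ('n \<Rightarrow> real)
    \<Rightarrow> (real ^ 'n) set \<Rightarrow> ereal" where
  "cap \<kappa> \<theta> \<sigma> B = Inf {cap_open \<kappa> \<theta> \<sigma> U | U.
      openin (top_of_set Rplus) U \<and> B \<subseteq> U}"

definition polar :: "('n::finite \<Rightarrow> real) \<Rightarrow> ('n \<Rightarrow> real) \<Rightarrow> ('n \<Rightarrow> real)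
    \<Rightarrow> (real ^ 'n) set \<Rightarrow> bool" where
  "polar \<kappa> \<theta> \<sigma> B = (cap \<kappa> \<theta> \<sigma> B = 0)"

end

theory Submission
  imports Defs "HOL-Computational_Algebra.Polynomial"
begin

text \<open>For a radial smooth cutoff \<open>f\<close> at scale \<open>r\<close> the gradient is of size \<open>1/r\<close>, the weight
  \<open>x\<^sub>i\<close> of the form is at most \<open>r\<close>, and the ball of radius \<open>r\<close> has \<open>\<pi>\<^sub>\<nu>\<close>-mass
  \<open>O(r\<^sup>\<Sigma>\<^sup>\<nu>) = O(r)\<close> because \<open>\<Sigma>\<nu>\<^sub>i \<ge> 1\<close>; so the energy of one cutoff stays bounded.
  Averaging \<open>N\<close> cutoffs at geometrically separated scales, whose gradients live on disjoint
  annuli, divides the energy by \<open>N\<close>, while the average is still 1 near the origin and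
  supported in a ball of radius \<open>\<surd>\<tau>\<close>. Hence \<open>cap {0} \<le> O(1/N) + O(\<surd>\<tau>)\<close> for all \<open>N, \<tau>\<close>.\<close>

lemma pderiv_i_eq: "(g has_derivative g') (at x) \<Longrightarrow> pderiv_i g i x = g' (axis i 1)"
  unfolding pderiv_i_def using frechet_derivative_at by metis

lemma Ck_Suc_imp_Ck: "Ck (Suc k) g \<Longrightarrow> Ck k g"
  by (induction k arbitrary: g) auto

lemma Ck_imp_continuous_on: "Ck k g \<Longrightarrow> continuous_on UNIV g"
  by (cases k) auto

lemma Ck_Suc_has_derivative:
  "Ck (Suc k) g \<Longrightarrow> (g has_derivative frechet_derivative g (at x)) (at x)"
  using frechet_derivative_works by auto

lemma Ck_SucI:
  assumes "\<And>x. (g has_derivative g' x) (at x)" and "\<And>i. Ck k (\<lambda>x. g' x (axis i 1))"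
  shows "Ck (Suc k) g"
proof -
  have "g differentiable (at x)" for x
    using assms(1) by (auto simp: differentiable_def)
  moreover have "pderiv_i g i = (\<lambda>x. g' x (axis i 1))" for i
    using pderiv_i_eq[OF assms(1)] by auto
  ultimately show ?thesis
    using assms(2) by (auto simp: differentiable_imp_continuous_on differentiable_on_def
        differentiable_at_withinI)
qed

lemma Ck_const: "Ck k (\<lambda>x::real^'n. c)"
proof (induction k arbitrary: c)
  case (Suc k)
  show ?case by (rule Ck_SucI[where g' = "\<lambda>x v. 0"]) (use Suc in auto)
qed simp

lemma Ck_vec_nth: "Ck k (\<lambda>x::real^'n. x $ j)"
proof (cases k)
  case (Suc m)
  show ?thesis unfolding Suc
    by (rule Ck_SucI[where g' = "\<lambda>x v. v $ j"])
       (auto intro: bounded_linear_imp_has_derivative bounded_linear_vec_nth Ck_const)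
qed (simp add: continuous_on_component)

lemma Ck_add: "Ck k f \<Longrightarrow> Ck k g \<Longrightarrow> Ck k (\<lambda>x. f x + g x)"
proof (induction k arbitrary: f g)
  case (Suc k)
  show ?case
  proof (rule Ck_SucI)
    show "((\<lambda>x. f x + g x) has_derivative
        (\<lambda>v. frechet_derivative f (at x) v + frechet_derivative g (at x) v)) (at x)" for x
      using Suc.prems by (intro has_derivative_add Ck_Suc_has_derivative)
    show "Ck k (\<lambda>x. frechet_derivative f (at x) (axis i 1) + frechet_derivative g (at x) (axis i 1))" for i
      using Suc by (simp add: pderiv_i_def[symmetric])
  qed
qed (auto intro: continuous_on_add)

lemma Ck_mult: "Ck k f \<Longrightarrow> Ck k g \<Longrightarrow> Ck k (\<lambda>x. f x * g x)"
proof (induction k arbitrary: f g)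
  case (Suc k)
  show ?case
  proof (rule Ck_SucI)
    show "((\<lambda>x. f x * g x) has_derivative
        (\<lambda>v. f x * frechet_derivative g (at x) v + frechet_derivative f (at x) v * g x)) (at x)" for x
      using Suc.prems by (intro has_derivative_mult Ck_Suc_has_derivative)
    show "Ck k (\<lambda>x. f x * frechet_derivative g (at x) (axis i 1)
        + frechet_derivative f (at x) (axis i 1) * g x)" for i
      using Suc by (simp add: pderiv_i_def[symmetric] Ck_add Ck_Suc_imp_Ck)
  qed
qed (auto intro: continuous_on_mult)

lemma Ck_sum:
  "finite A \<Longrightarrow> (\<And>a. a \<in> A \<Longrightarrow> Ck k (f a)) \<Longrightarrow> Ck k (\<lambda>x::real^'n. \<Sum>a\<in>A. f a x)"
  by (induction A rule: finite_induct) (auto intro: Ck_add Ck_const)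

lemma Ck_inner_self: "Ck k (\<lambda>x::real^'n. x \<bullet> x)"
  unfolding inner_vec_def by (rule Ck_sum) (simp_all add: Ck_mult Ck_vec_nth)

lemma Ck_inverse: "Ck k f \<Longrightarrow> (\<And>x. f x \<noteq> 0) \<Longrightarrow> Ck k (\<lambda>x. inverse (f x))"
proof (induction k arbitrary: f)
  case (Suc k)
  show ?case
  proof (rule Ck_SucI)
    show "((\<lambda>x. inverse (f x)) has_derivative
        (\<lambda>v. - (inverse (f x) * frechet_derivative f (at x) v * inverse (f x)))) (at x)" for x
      using Suc.prems by (intro Deriv.has_derivative_inverse Ck_Suc_has_derivative)
    have inv: "Ck k (\<lambda>x. inverse (f x))"
      using Suc by (blast dest: Ck_Suc_imp_Ck)
    have "Ck k (\<lambda>x. -1 * pderiv_i f i x)" for i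
      using Suc.prems by (intro Ck_mult Ck_const) auto
    then have "Ck k (\<lambda>x. (-1 * pderiv_i f i x) * (inverse (f x) * inverse (f x)))" for i
      using Ck_mult[OF _ Ck_mult[OF inv inv]] by blast
    then show "Ck k (\<lambda>x. - (inverse (f x) * frechet_derivative f (at x) (axis i 1) * inverse (f x)))" for i
      by (simp add: pderiv_i_def mult_ac)
  qed
qed (auto intro: continuous_on_inverse)

text \<open>Composition with a real function is handled for whole families \<open>F p\<close> that are closed
  under differentiation, since the derivatives of the composite involve \<open>F (D p)\<close>.\<close>
lemma Ck_compose_deriv_closed:
  assumes F: "\<And>p y. (F p has_real_derivative F (D p) y) (at y)"
  shows "Ck k u \<Longrightarrow> Ck k (\<lambda>x. F p (u x))"
proof (induction k arbitrary: p u)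
  case 0
  have "continuous_on UNIV (F p)"
    using F by (meson DERIV_continuous continuous_at_imp_continuous_on)
  with 0 show ?case by (auto intro: continuous_on_compose2)
next
  case (Suc k)
  show ?case
  proof (rule Ck_SucI)
    show "((\<lambda>x. F p (u x)) has_derivative
        (\<lambda>v. F (D p) (u x) * frechet_derivative u (at x) v)) (at x)" for x
      using has_derivative_compose[OF Ck_Suc_has_derivative[OF Suc.prems]
          F[unfolded has_field_derivative_def]]
      by (simp add: mult.commute)
    show "Ck k (\<lambda>x. F (D p) (u x) * frechet_derivative u (at x) (axis i 1))" for i
      using Suc by (simp add: pderiv_i_def[symmetric] Ck_mult Ck_Suc_imp_Ck)
  qed
qed

definition flat_fun :: "real poly \<Rightarrow> real \<Rightarrow> real" where
  "flat_fun p y = (if y > 0 then poly p (1/y) * exp (-1/y) else 0)"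

text \<open>\<open>d/dy (p(1/y) e\<^sup>-\<^sup>1\<^sup>/\<^sup>y) = q(1/y) e\<^sup>-\<^sup>1\<^sup>/\<^sup>y\<close> with \<open>q(z) = z\<^sup>2 (p(z) - p'(z))\<close>.\<close>
definition flat_dpoly :: "real poly \<Rightarrow> real poly" where
  "flat_dpoly p = [:0, 0, 1:] * (p - pderiv p)"

lemma poly_over_exp_tendsto_0: "((\<lambda>z::real. poly p z / exp z) \<longlongrightarrow> 0) at_top"
proof -
  have "((\<lambda>z. \<Sum>i\<le>degree p. coeff p i * (z^i / exp z)) \<longlongrightarrow> (\<Sum>i\<le>degree p. coeff p i * 0)) at_top"
    by (intro tendsto_intros) (use tendsto_power_div_exp_0 in blast)
  then show ?thesis by (simp add: poly_altdef sum_divide_distrib)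
qed

lemma has_real_derivative_flat_fun:
  "(flat_fun p has_real_derivative flat_fun (flat_dpoly p) y) (at y)"
proof -
  consider "y > 0" | "y < 0" | "y = 0" by linarith
  then show ?thesis
  proof cases
    case 1
    have d: "((\<lambda>z. poly p (1/z) * exp (-1/z)) has_real_derivative
        poly (pderiv p) (1/y) * (- 1 / y^2) * exp (-1/y) + poly p (1/y) * (exp (-1/y) * (1/y^2))) (at y)"
      using 1 by (auto intro!: derivative_eq_intros DERIV_chain2[OF poly_DERIV]
          simp: power2_eq_square field_simps)
    have "flat_fun (flat_dpoly p) y
        = poly (pderiv p) (1/y) * (- 1 / y^2) * exp (-1/y) + poly p (1/y) * (exp (-1/y) * (1/y^2))"
      using 1 by (simp add: flat_fun_def flat_dpoly_def algebra_simps power2_eq_square)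
    then show ?thesis
      using has_field_derivative_transform_within_open[OF d, of "{0<..}" "flat_fun p"] 1
      by (simp add: flat_fun_def)
  next
    case 2
    then show ?thesis
      using has_field_derivative_transform_within_open[of "\<lambda>_. 0" 0 y "{..<0}" "flat_fun p"]
      by (simp add: flat_fun_def)
  next
    case 3
    have left: "((\<lambda>z. (flat_fun p z - flat_fun p 0) / (z - 0)) \<longlongrightarrow> 0) (at_left 0)"
      by (rule Lim_transform_eventually[OF tendsto_const])
         (auto simp: eventually_at_left_field flat_fun_def intro!: exI[of _ "-1"])
    have "\<forall>\<^sub>F z in at_top. poly ([:0, 1:] * p) z / exp z
        = (flat_fun p (inverse z) - flat_fun p 0) / (inverse z - 0)"
      using eventually_gt_at_top[of 0]
      by eventually_elim (simp add: flat_fun_def exp_minus field_simps)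
    then have right: "((\<lambda>z. (flat_fun p z - flat_fun p 0) / (z - 0)) \<longlongrightarrow> 0) (at_right 0)"
      unfolding filterlim_at_right_to_top
      by (rule Lim_transform_eventually[OF poly_over_exp_tendsto_0])
    show ?thesis
      using filterlim_split_at[OF left right] 3
      by (simp add: has_field_derivative_iff flat_fun_def)
  qed
qed

lemma continuous_on_flat_fun: "continuous_on UNIV (flat_fun p)"
  using has_real_derivative_flat_fun by (meson DERIV_continuous continuous_at_imp_continuous_on)

lemma continuous_on_flat_fun_comp [continuous_intros]:
  "continuous_on S f \<Longrightarrow> continuous_on S (\<lambda>x. flat_fun p (f x))"
  by (rule continuous_on_compose2[OF continuous_on_flat_fun]) auto

lemma Ck_flat_fun_comp: "Ck k u \<Longrightarrow> Ck k (\<lambda>x. flat_fun p (u x))"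
  by (rule Ck_compose_deriv_closed[where F = flat_fun and D = flat_dpoly])
     (rule has_real_derivative_flat_fun)

lemma flat_fun_1: "flat_fun 1 y = (if y > 0 then exp (-1/y) else 0)"
  by (simp add: flat_fun_def)

lemma cutoff_denom_pos: "0 < flat_fun 1 (1 - s) + flat_fun 1 (s - 1/4)"
  by (cases "s < 1") (auto simp: flat_fun_1 add_pos_nonneg add_nonneg_pos)

definition cutoff :: "real \<Rightarrow> real" where
  "cutoff s = flat_fun 1 (1 - s) / (flat_fun 1 (1 - s) + flat_fun 1 (s - 1/4))"

definition cutoff' :: "real \<Rightarrow> real" where
  "cutoff' s = (- flat_fun (flat_dpoly 1) (1 - s) * flat_fun 1 (s - 1/4)
      - flat_fun 1 (1 - s) * flat_fun (flat_dpoly 1) (s - 1/4))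
    / (flat_fun 1 (1 - s) + flat_fun 1 (s - 1/4))^2"

lemma has_real_derivative_cutoff: "(cutoff has_real_derivative cutoff' s) (at s)"
proof -
  have a: "((\<lambda>s. flat_fun 1 (1 - s)) has_real_derivative flat_fun (flat_dpoly 1) (1 - s) * (- 1)) (at s)"
    by (rule DERIV_chain2[OF has_real_derivative_flat_fun]) (auto intro!: derivative_eq_intros)
  have b: "((\<lambda>s. flat_fun 1 (s - 1/4)) has_real_derivative flat_fun (flat_dpoly 1) (s - 1/4) * 1) (at s)"
    by (rule DERIV_chain2[OF has_real_derivative_flat_fun]) (auto intro!: derivative_eq_intros)
  show ?thesis
    unfolding cutoff_def[abs_def]
    using DERIV_divide[OF a DERIV_add[OF a b]] cutoff_denom_pos[of s]
    by (simp add: cutoff'_def power2_eq_square algebra_simps)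
qed

lemma continuous_on_cutoff': "continuous_on UNIV cutoff'"
  unfolding cutoff'_def using cutoff_denom_pos
  by (intro continuous_intros) (simp add: less_imp_neq[symmetric])

lemma cutoff'_eq_0: "s < 1/4 \<or> s > 1 \<Longrightarrow> cutoff' s = 0"
  by (auto simp: cutoff'_def flat_fun_def)

lemma cutoff'_bounded: "\<exists>M. \<forall>s. \<bar>cutoff' s\<bar> \<le> M"
proof -
  have "compact (cutoff' ` {1/4..1})"
    by (rule compact_continuous_image[OF continuous_on_subset[OF continuous_on_cutoff']]) auto
  then obtain M where M: "\<forall>y\<in>cutoff' ` {1/4..1}. norm y \<le> M"
    by (meson bounded_iff compact_imp_bounded)
  have "\<bar>cutoff' s\<bar> \<le> max M 0" for s
    using M cutoff'_eq_0[of s] by (cases "s \<in> {1/4..1}") (auto simp: le_max_iff_disj)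
  then show ?thesis by blast
qed

lemma cutoff_eq_1: "s \<le> 1/4 \<Longrightarrow> cutoff s = 1"
  by (simp add: cutoff_def flat_fun_1)

lemma cutoff_eq_0: "1 \<le> s \<Longrightarrow> cutoff s = 0"
  by (simp add: cutoff_def flat_fun_1)

lemma cutoff_nonneg: "0 \<le> cutoff s"
  using cutoff_denom_pos[of s] by (simp add: cutoff_def flat_fun_1)

lemma cutoff_le_1: "cutoff s \<le> 1"
  using cutoff_denom_pos[of s] by (simp add: cutoff_def flat_fun_1)

lemma Ck_cutoff_comp: "Ck k u \<Longrightarrow> Ck k (\<lambda>x. cutoff (u x))"
proof -
  assume u: "Ck k u"
  have num: "Ck k (\<lambda>x. flat_fun 1 (1 - u x))"
    using Ck_flat_fun_comp[OF Ck_add[OF Ck_const Ck_mult[OF Ck_const u]], of 1 1 "-1"] by simp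
  have "Ck k (\<lambda>x. flat_fun 1 (u x - 1/4))"
    using Ck_flat_fun_comp[OF Ck_add[OF u Ck_const], of 1 "-1/4"] by simp
  then have "Ck k (\<lambda>x. inverse (flat_fun 1 (1 - u x) + flat_fun 1 (u x - 1/4)))"
    using cutoff_denom_pos by (intro Ck_inverse Ck_add[OF num]) (auto simp: less_imp_neq[symmetric])
  then show ?thesis
    unfolding cutoff_def divide_inverse by (rule Ck_mult[OF num])
qed

lemma has_derivative_cutoff_radial:
  "((\<lambda>x::real^'n. cutoff ((x \<bullet> x) / t)) has_derivative
     (\<lambda>v. cutoff' ((x \<bullet> x) / t) * (2 * (x \<bullet> v) / t))) (at x)"
proof -
  have "((\<lambda>x::real^'n. (x \<bullet> x) / t) has_derivative (\<lambda>v. 2 * (x \<bullet> v) / t)) (at x)"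
    by (cases "t = 0") (auto intro!: derivative_eq_intros simp: inner_commute field_simps)
  from has_derivative_compose[OF this has_real_derivative_cutoff[unfolded has_field_derivative_def]]
  show ?thesis by (simp add: mult.commute)
qed

lemma cutoff'_ne_0_imp: "cutoff' s \<noteq> 0 \<Longrightarrow> 1/4 \<le> s \<and> s \<le> 1"
  using cutoff'_eq_0 by force

lemma cutoff_radial_energy_le:
  fixes x :: "real^'n"
  assumes M: "\<And>s. \<bar>cutoff' s\<bar> \<le> M" and t: "0 < t"
  shows "x $ i * (cutoff' ((x \<bullet> x) / t) * (2 * x $ i / t))^2
    \<le> 4 * M^2 / sqrt t * indicator (cball 0 (sqrt t)) x"
proof (cases "cutoff' ((x \<bullet> x) / t) = 0")
  case False
  define s where "s = sqrt t"
  have s: "0 < s" "s^2 = t" using t by (auto simp: s_def)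
  have "x \<bullet> x \<le> t"
    using cutoff'_ne_0_imp[OF False] t by (simp add: divide_le_eq)
  then have "norm x \<le> s"
    by (simp add: s_def norm_eq_sqrt_inner real_sqrt_le_mono)
  then have x: "x \<in> cball 0 s" and xi: "\<bar>x $ i\<bar> \<le> s"
    using component_le_norm_cart[of x i] by auto
  have "x $ i ^ 3 \<le> s ^ 3"
    using abs_ge_self[of "x $ i ^ 3"] power_mono[OF xi, of 3] by (simp add: power_abs)
  moreover have "(cutoff' ((x \<bullet> x) / t))^2 \<le> M^2"
    using power_mono[OF M, of _ 2] by simp
  ultimately have "x $ i ^ 3 * (4 * (cutoff' ((x \<bullet> x) / t))^2 / t^2) \<le> s ^ 3 * (4 * M^2 / t^2)"
    using s by (intro mult_mono divide_right_mono) auto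
  also have "\<dots> = 4 * M^2 / s"
    using s(1) by (simp add: s(2)[symmetric] field_simps power2_eq_square power3_eq_cube)
  finally show ?thesis
    using x by (simp add: s_def power2_eq_square power3_eq_cube field_simps)
qed (use t in \<open>simp split: split_indicator\<close>)

lemma power2_sum_eq_sum_power2:
  fixes a :: "'a \<Rightarrow> 'b::comm_ring_1"
  assumes "\<And>j k. j \<in> A \<Longrightarrow> k \<in> A \<Longrightarrow> j \<noteq> k \<Longrightarrow> a j * a k = 0"
  shows "(\<Sum>j\<in>A. a j)^2 = (\<Sum>j\<in>A. (a j)^2)"
  using assms
proof (induction A rule: infinite_finite_induct)
  case (insert j A)
  have "a j * (\<Sum>k\<in>A. a k) = 0"
    using insert.prems insert.hyps by (auto simp: sum_distrib_left intro!: sum.neutral)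
  with insert show ?case
    by (simp add: power2_sum mult.assoc)
qed auto

text \<open>The \<open>j\<close>-th cutoff has its gradient in the annulus \<open>\<tau>/(4\<cdot>8\<^sup>j) \<le> |x|\<^sup>2 \<le> \<tau>/8\<^sup>j\<close>;
  the factor 8 between consecutive scales makes these annuli disjoint.\<close>
definition averaged_cutoff :: "real \<Rightarrow> nat \<Rightarrow> real^'n \<Rightarrow> real" where
  "averaged_cutoff \<tau> N x = 1 / real N * (\<Sum>j<N. cutoff ((x \<bullet> x) / (\<tau> / 8^j)))"

lemma cutoff'_scales_disjoint:
  assumes "0 < \<tau>" "j \<noteq> k"
  shows "cutoff' (r / (\<tau> / 8^j)) * cutoff' (r / (\<tau> / 8^k)) = 0"
proof -
  have annulus: "\<tau> / 8^l / 4 \<le> r \<and> r \<le> \<tau> / 8^l" if "cutoff' (r / (\<tau> / 8^l)) \<noteq> 0" for l :: nat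
    using cutoff'_ne_0_imp[OF that] assms(1) by (simp add: field_simps)
  have scales: "\<tau> / 8^l \<le> \<tau> / 8^m / 8" if "m < l" for l m :: nat
  proof -
    have "(8::real) ^ Suc m \<le> 8 ^ l" using that by (intro power_increasing) auto
    then show ?thesis using assms(1) by (simp add: divide_left_mono mult_ac)
  qed
  show ?thesis
  proof (rule ccontr)
    assume "cutoff' (r / (\<tau> / 8^j)) * cutoff' (r / (\<tau> / 8^k)) \<noteq> 0"
    with annulus have "\<tau> / 8^j / 4 \<le> r" "r \<le> \<tau> / 8^j" "\<tau> / 8^k / 4 \<le> r" "r \<le> \<tau> / 8^k"
      by auto
    moreover have "0 < \<tau> / 8^j" "0 < \<tau> / 8^k"
      using assms(1) by auto
    ultimately show False
      using scales[of j k] scales[of k j] assms(2) by (cases j k rule: linorder_cases) auto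
  qed
qed

lemma Ck_averaged_cutoff: "Ck k (averaged_cutoff \<tau> N :: real^'n \<Rightarrow> real)"
proof -
  have radial: "Ck k (\<lambda>x::real^'n. cutoff ((x \<bullet> x) / c))" for c
    using Ck_cutoff_comp[OF Ck_mult[OF Ck_inner_self Ck_const, of k "1/c"]] by simp
  show ?thesis
    unfolding averaged_cutoff_def[abs_def] by (intro Ck_mult[OF Ck_const] Ck_sum finite_lessThan radial)
qed

lemma pderiv_i_averaged_cutoff:
  "pderiv_i (averaged_cutoff \<tau> N) i x
    = 1 / real N * (\<Sum>j<N. cutoff' ((x \<bullet> x) / (\<tau> / 8^j)) * (2 * x $ i / (\<tau> / 8^j)))"
proof -
  have "(averaged_cutoff \<tau> N has_derivative (\<lambda>v. 1 / real N *
      (\<Sum>j<N. cutoff' ((x \<bullet> x) / (\<tau> / 8^j)) * (2 * (x \<bullet> v) / (\<tau> / 8^j))))) (at x)"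
    unfolding averaged_cutoff_def[abs_def]
    by (intro has_derivative_mult_right has_derivative_sum has_derivative_cutoff_radial)
  from pderiv_i_eq[OF this] show ?thesis
    by (simp only: inner_axis real_inner_1_right)
qed

lemma averaged_cutoff_nonneg: "0 \<le> averaged_cutoff \<tau> N x"
  unfolding averaged_cutoff_def by (simp add: sum_nonneg cutoff_nonneg)

lemma averaged_cutoff_le_1: "averaged_cutoff \<tau> N x \<le> 1"
proof -
  have "(\<Sum>j<N. cutoff ((x \<bullet> x) / (\<tau> / 8^j))) \<le> (\<Sum>j<N. 1)"
    by (intro sum_mono cutoff_le_1)
  then show ?thesis
    by (cases "N = 0") (auto simp: averaged_cutoff_def divide_le_eq)
qed

lemma averaged_cutoff_eq_0:
  assumes "0 < \<tau>" "\<tau> \<le> x \<bullet> x"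
  shows "averaged_cutoff \<tau> N x = 0"
proof -
  have "cutoff ((x \<bullet> x) / (\<tau> / 8^j)) = 0" for j :: nat
  proof (rule cutoff_eq_0)
    have "\<tau> / 8^j \<le> \<tau> / 1"
      using assms(1) by (intro divide_left_mono) auto
    then have "(\<tau> / 8^j) / (\<tau> / 8^j) \<le> (x \<bullet> x) / (\<tau> / 8^j)"
      using assms by (intro divide_right_mono) auto
    then show "1 \<le> (x \<bullet> x) / (\<tau> / 8^j)"
      using assms(1) by simp
  qed
  then show ?thesis by (simp add: averaged_cutoff_def)
qed

lemma averaged_cutoff_eq_1:
  assumes "0 < \<tau>" "0 < N" "x \<bullet> x \<le> \<tau> / 8^(N - 1) / 4"
  shows "averaged_cutoff \<tau> N x = 1"
proof -
  have "cutoff ((x \<bullet> x) / (\<tau> / 8^j)) = 1" if "j < N" for j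
  proof (rule cutoff_eq_1)
    have "\<tau> / 8^(N - 1) \<le> \<tau> / 8^j"
      using assms(1) that by (intro divide_left_mono power_increasing) auto
    with assms(3) have "(x \<bullet> x) / (\<tau> / 8^j) \<le> (\<tau> / 8^j / 4) / (\<tau> / 8^j)"
      using assms(1) by (intro divide_right_mono) auto
    also have "\<dots> = 1/4"
      using assms(1) by simp
    finally show "(x \<bullet> x) / (\<tau> / 8^j) \<le> 1/4" .
  qed
  then show ?thesis using assms(2) by (simp add: averaged_cutoff_def)
qed

lemma averaged_cutoff_sq_le:
  assumes "0 < \<tau>"
  shows "(averaged_cutoff \<tau> N x)^2 \<le> indicator (cball 0 (sqrt \<tau>)) x"
proof (cases "x \<bullet> x < \<tau>")
  case True
  then have "x \<in> cball 0 (sqrt \<tau>)"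
    by (simp add: norm_eq_sqrt_inner real_sqrt_le_mono)
  then show ?thesis
    by (simp add: power_le_one averaged_cutoff_nonneg averaged_cutoff_le_1)
next
  case False
  then show ?thesis using averaged_cutoff_eq_0[OF assms, of x N] by simp
qed

lemma test_fun_averaged_cutoff:
  assumes "0 < \<tau>"
  shows "test_fun (averaged_cutoff \<tau> N :: real^'n \<Rightarrow> real)"
proof -
  have "{x::real^'n. averaged_cutoff \<tau> N x \<noteq> 0} \<subseteq> cball 0 (sqrt \<tau>)"
    using averaged_cutoff_eq_0[OF assms]
    by (force simp: norm_eq_sqrt_inner intro: real_sqrt_le_mono)
  then show ?thesis
    using Ck_averaged_cutoff bounded_subset[OF bounded_cball]
    by (auto simp: test_fun_def smooth_def pderiv_i_averaged_cutoff)
qed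

lemma averaged_cutoff_energy_le:
  fixes x :: "real^'n"
  assumes "0 < \<tau>" and M: "\<And>s. \<bar>cutoff' s\<bar> \<le> M"
  shows "x $ i * (pderiv_i (averaged_cutoff \<tau> N) i x)^2
    \<le> (\<Sum>j<N. 4 * M^2 / sqrt (\<tau> / 8^j) * indicator (cball 0 (sqrt (\<tau> / 8^j))) x) / (real N)^2"
proof -
  define a where "a j = cutoff' ((x \<bullet> x) / (\<tau> / 8^j)) * (2 * x $ i / (\<tau> / 8^j))" for j :: nat
  have "a j * a k = 0" if "j \<noteq> k" for j k
  proof -
    have "a j * a k = cutoff' ((x \<bullet> x) / (\<tau> / 8^j)) * cutoff' ((x \<bullet> x) / (\<tau> / 8^k))
        * ((2 * x $ i / (\<tau> / 8^j)) * (2 * x $ i / (\<tau> / 8^k)))"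
      by (simp only: a_def mult_ac)
    then show ?thesis
      using cutoff'_scales_disjoint[OF assms(1) that] by simp
  qed
  then have "(\<Sum>j<N. a j)^2 = (\<Sum>j<N. (a j)^2)"
    by (intro power2_sum_eq_sum_power2)
  moreover have "x $ i * (pderiv_i (averaged_cutoff \<tau> N) i x)^2 = x $ i * (\<Sum>j<N. a j)^2 / (real N)^2"
    by (simp only: pderiv_i_averaged_cutoff a_def[symmetric] power_mult_distrib) (simp add: power_divide)
  ultimately have "x $ i * (pderiv_i (averaged_cutoff \<tau> N) i x)^2 = (\<Sum>j<N. x $ i * (a j)^2) / (real N)^2"
    by (simp only: sum_distrib_left)
  also have "\<dots> \<le> (\<Sum>j<N. 4 * M^2 / sqrt (\<tau> / 8^j) * indicator (cball 0 (sqrt (\<tau> / 8^j))) x) / (real N)^2"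
    unfolding a_def using assms
    by (intro divide_right_mono sum_mono cutoff_radial_energy_le) auto
  finally show ?thesis .
qed

lemma sets_gamma_prod [simp, measurable_cong]: "sets (gamma_prod \<nu> \<theta>) = sets borel"
  by (simp add: gamma_prod_def)

lemma nn_integral_lborel_vec_prod:
  fixes \<phi> :: "'n::finite \<Rightarrow> real \<Rightarrow> ennreal"
  assumes [measurable]: "\<And>i. \<phi> i \<in> borel_measurable borel"
  shows "(\<integral>\<^sup>+x. (\<Prod>i\<in>UNIV. \<phi> i (x $ i)) \<partial>(lborel :: (real^'n) measure))
    = (\<Prod>i\<in>UNIV. \<integral>\<^sup>+y. \<phi> i y \<partial>lborel)"
proof -
  define f where "f b = \<phi> (axis_index (b::real^'n))" for b
  have "(\<integral>\<^sup>+x. (\<Prod>b\<in>Basis. f b (x \<bullet> b)) \<partial>(lborel :: (real^'n) measure)) = (\<Prod>b\<in>Basis. (\<integral>\<^sup>+x. f b x \<partial>lborel))"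
    by (rule nn_integral_lborel_prod) (auto simp: f_def)
  moreover have "(\<Prod>b\<in>Basis. f b (x \<bullet> b)) = (\<Prod>i\<in>UNIV. \<phi> i (x $ i))" for x :: "real^'n"
    by (simp add: f_def Basis_vec_def UNION_singleton_eq_range prod.reindex axis_eq_axis inj_on_def inner_axis)
  moreover have "(\<Prod>b\<in>(Basis :: (real^'n) set). (\<integral>\<^sup>+x. f b x \<partial>lborel)) = (\<Prod>i\<in>UNIV. \<integral>\<^sup>+y. \<phi> i y \<partial>lborel)"
    by (simp add: f_def Basis_vec_def UNION_singleton_eq_range prod.reindex axis_eq_axis inj_on_def)
  ultimately show ?thesis by simp
qed

lemma nn_integral_indicator_powr:
  fixes a c \<rho> :: real
  assumes "0 < a" "0 \<le> c" "0 \<le> \<rho>"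
  shows "(\<integral>\<^sup>+y. ennreal (indicator {0..\<rho>} y * (c * y powr (a - 1))) \<partial>lborel) = ennreal (c * \<rho> powr a / a)"
proof (rule nn_integral_has_integral_lborel)
  have "((\<lambda>y. c * y powr (a - 1)) has_integral (c * (\<rho> powr a / a))) {0..\<rho>}"
    using has_integral_mult_right[OF has_integral_powr_from_0[of "a - 1" \<rho>]] assms by simp
  then have "((\<lambda>y. if y \<in> {0..\<rho>} then c * y powr (a - 1) else 0) has_integral (c * \<rho> powr a / a)) UNIV"
    by (subst has_integral_restrict_UNIV) simp
  moreover have "(\<lambda>y. if y \<in> {0..\<rho>} then c * y powr (a - 1) else 0)
      = (\<lambda>y. indicator {0..\<rho>} y * (c * y powr (a - 1)))"
    by (simp add: fun_eq_iff split: split_indicator)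
  ultimately show "((\<lambda>y. indicator {0..\<rho>} y * (c * y powr (a - 1))) has_integral (c * \<rho> powr a / a)) UNIV"
    by simp
qed (use assms in \<open>auto simp: indicator_def\<close>)

definition gamma_normaliser :: "('n \<Rightarrow> real) \<Rightarrow> ('n \<Rightarrow> real) \<Rightarrow> 'n \<Rightarrow> real" where
  "gamma_normaliser \<nu> \<theta> i = (\<nu> i / \<theta> i) powr \<nu> i / Gamma (\<nu> i)"

definition small_ball_const :: "('n::finite \<Rightarrow> real) \<Rightarrow> ('n \<Rightarrow> real) \<Rightarrow> real" where
  "small_ball_const \<nu> \<theta> = (\<Prod>i\<in>UNIV. gamma_normaliser \<nu> \<theta> i / \<nu> i)"

locale gamma_product =
  fixes \<nu> \<theta> :: "'n::finite \<Rightarrow> real"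
  assumes \<nu>_pos: "\<And>i. 0 < \<nu> i" and \<theta>_pos: "\<And>i. 0 < \<theta> i"
begin

abbreviation \<pi> :: "(real^'n) measure" where "\<pi> \<equiv> gamma_prod \<nu> \<theta>"

lemma gamma_normaliser_pos: "0 < gamma_normaliser \<nu> \<theta> i"
  using \<nu>_pos[of i] \<theta>_pos[of i] by (simp add: gamma_normaliser_def)

lemma small_ball_const_pos: "0 < small_ball_const \<nu> \<theta>"
  unfolding small_ball_const_def using gamma_normaliser_pos \<nu>_pos by (simp add: prod_pos)

lemma gamma_factor_le_powr:
  assumes "0 \<le> y"
  shows "gamma_normaliser \<nu> \<theta> i * y powr (\<nu> i - 1) * exp (- \<nu> i * y / \<theta> i)
    \<le> gamma_normaliser \<nu> \<theta> i * y powr (\<nu> i - 1)"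
  using assms gamma_normaliser_pos[of i] \<nu>_pos[of i] \<theta>_pos[of i] by (simp add: mult_left_le)

lemma emeasure_cube_le:
  assumes "0 < \<rho>"
  shows "emeasure \<pi> {x. \<forall>i. x $ i \<le> \<rho>}
    \<le> ennreal (\<Prod>i\<in>UNIV. gamma_normaliser \<nu> \<theta> i * \<rho> powr \<nu> i / \<nu> i)"
proof -
  define A where "A = {x::real^'n. \<forall>i. x $ i \<le> \<rho>}"
  have [measurable]: "A \<in> sets borel"
    unfolding A_def by (intro borel_closed closed_Collect_all closed_Collect_le continuous_intros)
  define \<phi> where "\<phi> i y = indicator {0..\<rho>} y * (gamma_normaliser \<nu> \<theta> i * y powr (\<nu> i - 1))" for i y
  have \<phi>_nonneg: "0 \<le> \<phi> i y" for i y
    using gamma_normaliser_pos[of i] by (simp add: \<phi>_def split: split_indicator)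
  have "emeasure \<pi> A = (\<integral>\<^sup>+x. indicator A x * ennreal (indicator Rplus x * (\<Prod>i\<in>UNIV.
      gamma_normaliser \<nu> \<theta> i * (x $ i) powr (\<nu> i - 1) * exp (- \<nu> i * x $ i / \<theta> i))) \<partial>lborel)"
    unfolding gamma_prod_def gamma_normaliser_def
    by (subst emeasure_density) (auto simp: Rplus_def mult.commute intro!: nn_integral_cong)
  also have "\<dots> \<le> (\<integral>\<^sup>+x. ennreal (\<Prod>i\<in>UNIV. \<phi> i (x $ i)) \<partial>lborel)"
  proof (intro nn_integral_mono)
    fix x :: "real^'n"
    show "indicator A x * ennreal (indicator Rplus x * (\<Prod>i\<in>UNIV.
        gamma_normaliser \<nu> \<theta> i * (x $ i) powr (\<nu> i - 1) * exp (- \<nu> i * x $ i / \<theta> i)))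
      \<le> ennreal (\<Prod>i\<in>UNIV. \<phi> i (x $ i))"
    proof (cases "x \<in> A \<inter> Rplus")
      case True
      then have "0 \<le> x $ i \<and> x $ i \<le> \<rho>" for i
        by (auto simp: A_def Rplus_def)
      then have "gamma_normaliser \<nu> \<theta> i * (x $ i) powr (\<nu> i - 1) * exp (- \<nu> i * x $ i / \<theta> i)
          \<le> \<phi> i (x $ i)" for i
        using gamma_factor_le_powr[of "x $ i" i] by (simp add: \<phi>_def)
      moreover have "0 \<le> gamma_normaliser \<nu> \<theta> i * (x $ i) powr (\<nu> i - 1) * exp (- \<nu> i * x $ i / \<theta> i)" for i
        using gamma_normaliser_pos[of i] by simp
      ultimately show ?thesis
        using True by (auto intro!: ennreal_leI prod_mono)
    qed (auto simp: indicator_def)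
  qed
  also have "\<dots> = (\<Prod>i\<in>UNIV. \<integral>\<^sup>+y. ennreal (\<phi> i y) \<partial>lborel)"
    using \<phi>_nonneg by (subst prod_ennreal[symmetric]) (auto intro!: nn_integral_lborel_vec_prod simp: \<phi>_def)
  also have "\<dots> = (\<Prod>i\<in>UNIV. ennreal (gamma_normaliser \<nu> \<theta> i * \<rho> powr \<nu> i / \<nu> i))"
    unfolding \<phi>_def using assms \<nu>_pos gamma_normaliser_pos
    by (intro prod.cong refl nn_integral_indicator_powr) (auto simp: less_imp_le)
  also have "\<dots> = ennreal (\<Prod>i\<in>UNIV. gamma_normaliser \<nu> \<theta> i * \<rho> powr \<nu> i / \<nu> i)"
    using \<nu>_pos gamma_normaliser_pos by (intro prod_ennreal) (simp add: less_imp_le)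
  finally show ?thesis unfolding A_def .
qed

lemma emeasure_cball_le:
  assumes "0 < r"
  shows "emeasure \<pi> (cball 0 r) \<le> ennreal (small_ball_const \<nu> \<theta> * r powr (\<Sum>i\<in>UNIV. \<nu> i))"
proof -
  have "cball 0 r \<subseteq> {x::real^'n. \<forall>i. x $ i \<le> r}"
  proof safe
    fix x :: "real^'n" and i assume "x \<in> cball 0 r"
    then show "x $ i \<le> r" using component_le_norm_cart[of x i] by simp
  qed
  moreover have "{x::real^'n. \<forall>i. x $ i \<le> r} \<in> sets \<pi>"
    by (simp add: borel_closed closed_Collect_all closed_Collect_le continuous_on_component)
  ultimately have "emeasure \<pi> (cball 0 r) \<le> emeasure \<pi> {x. \<forall>i. x $ i \<le> r}"
    by (rule emeasure_mono)
  also have "\<dots> \<le> ennreal (\<Prod>i\<in>UNIV. gamma_normaliser \<nu> \<theta> i * r powr \<nu> i / \<nu> i)"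
    by (rule emeasure_cube_le[OF assms])
  also have "(\<Prod>i\<in>UNIV. gamma_normaliser \<nu> \<theta> i * r powr \<nu> i / \<nu> i)
      = small_ball_const \<nu> \<theta> * r powr (\<Sum>i\<in>UNIV. \<nu> i)"
    using assms by (simp add: small_ball_const_def powr_sum prod.distrib[symmetric] mult_ac)
  finally show ?thesis .
qed

text \<open>This is where \<open>\<Sum>i. \<nu> i \<ge> 1\<close> enters: small balls have mass at most linear in the radius.\<close>
lemma measure_cball_le:
  assumes "1 \<le> (\<Sum>i\<in>UNIV. \<nu> i)" "0 < r" "r \<le> 1"
  shows "emeasure \<pi> (cball 0 r) < \<infinity>" and "measure \<pi> (cball 0 r) \<le> small_ball_const \<nu> \<theta> * r"
proof -
  have le: "emeasure \<pi> (cball 0 r) \<le> ennreal (small_ball_const \<nu> \<theta> * r powr (\<Sum>i\<in>UNIV. \<nu> i))"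
    by (rule emeasure_cball_le[OF assms(2)])
  then show "emeasure \<pi> (cball 0 r) < \<infinity>"
    using le_less_trans[OF le ennreal_less_top] by simp
  have "r powr (\<Sum>i\<in>UNIV. \<nu> i) \<le> r powr 1"
    using assms by (intro powr_mono') auto
  then have "small_ball_const \<nu> \<theta> * r powr (\<Sum>i\<in>UNIV. \<nu> i) \<le> small_ball_const \<nu> \<theta> * r"
    using assms(2) small_ball_const_pos by (intro mult_left_mono) auto
  moreover have "measure \<pi> (cball 0 r) \<le> small_ball_const \<nu> \<theta> * r powr (\<Sum>i\<in>UNIV. \<nu> i)"
    unfolding measure_def using le small_ball_const_pos by (intro enn2real_leI) auto
  ultimately show "measure \<pi> (cball 0 r) \<le> small_ball_const \<nu> \<theta> * r"
    by linarith
qed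

lemma averaged_cutoff_sq_integral_le:
  assumes "1 \<le> (\<Sum>i\<in>UNIV. \<nu> i)" "0 < \<tau>" "\<tau> \<le> 1"
  shows "integrable \<pi> (\<lambda>x. (averaged_cutoff \<tau> N x)^2)"
    and "integral\<^sup>L \<pi> (\<lambda>x. (averaged_cutoff \<tau> N x)^2) \<le> small_ball_const \<nu> \<theta> * sqrt \<tau>"
proof -
  have ball: "integrable \<pi> (indicator (cball 0 (sqrt \<tau>)) :: real^'n \<Rightarrow> real)"
    using measure_cball_le(1)[OF assms(1), of "sqrt \<tau>"] assms by (intro integrable_real_indicator) auto
  have "continuous_on UNIV (averaged_cutoff \<tau> N :: real^'n \<Rightarrow> real)"
    using Ck_imp_continuous_on[OF Ck_averaged_cutoff[of 0]] .
  then have [measurable]: "averaged_cutoff \<tau> N \<in> borel_measurable \<pi>"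
    by (subst measurable_cong_sets[OF sets_gamma_prod refl]) (rule borel_measurable_continuous_onI)
  show "integrable \<pi> (\<lambda>x. (averaged_cutoff \<tau> N x)^2)"
    using averaged_cutoff_sq_le[OF assms(2)]
    by (intro Bochner_Integration.integrable_bound[OF ball]) auto
  have "integral\<^sup>L \<pi> (\<lambda>x. (averaged_cutoff \<tau> N x)^2) \<le> integral\<^sup>L \<pi> (indicator (cball 0 (sqrt \<tau>)))"
    using averaged_cutoff_sq_le[OF assms(2)] by (intro integral_mono_AE'[OF ball]) auto
  also have "\<dots> \<le> small_ball_const \<nu> \<theta> * sqrt \<tau>"
    using measure_cball_le(2)[OF assms(1), of "sqrt \<tau>"] assms by simp
  finally show "integral\<^sup>L \<pi> (\<lambda>x. (averaged_cutoff \<tau> N x)^2) \<le> small_ball_const \<nu> \<theta> * sqrt \<tau>" .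
qed

text \<open>Each of the \<open>N\<close> scales contributes \<open>O(1/N\<^sup>2)\<close>, so the energy is \<open>O(1/N)\<close>.\<close>
lemma averaged_cutoff_energy_integral_le:
  assumes "1 \<le> (\<Sum>i\<in>UNIV. \<nu> i)" "0 < \<tau>" "\<tau> \<le> 1" "0 < N" and M: "\<And>s. \<bar>cutoff' s\<bar> \<le> M"
  shows "integral\<^sup>L \<pi> (\<lambda>x. x $ i * (pderiv_i (averaged_cutoff \<tau> N) i x)^2)
    \<le> 4 * M^2 * small_ball_const \<nu> \<theta> / real N"
proof -
  define t where "t j = \<tau> / 8^j" for j :: nat
  have t: "0 < t j" "t j \<le> 1" for j
    using assms(2,3) by (auto simp: t_def divide_le_eq intro: order_trans[OF _ one_le_power])
  define c where "c j = 4 * M^2 / sqrt (t j) / (real N)^2" for j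
  have ball: "integrable \<pi> (indicator (cball 0 (sqrt (t j))) :: real^'n \<Rightarrow> real)" for j
    using measure_cball_le(1)[OF assms(1), of "sqrt (t j)"] t[of j]
    by (intro integrable_real_indicator) auto
  define R where "R x = (\<Sum>j<N. c j * indicator (cball 0 (sqrt (t j))) x)" for x :: "real^'n"
  have "integral\<^sup>L \<pi> (\<lambda>x. x $ i * (pderiv_i (averaged_cutoff \<tau> N) i x)^2) \<le> integral\<^sup>L \<pi> R"
  proof (rule integral_mono_AE')
    show "integrable \<pi> R"
      unfolding R_def by (intro Bochner_Integration.integrable_sum integrable_mult_right ball)
    show "AE x in \<pi>. x $ i * (pderiv_i (averaged_cutoff \<tau> N) i x)^2 \<le> R x"
      using averaged_cutoff_energy_le[OF assms(2) M]
      by (intro AE_I2) (simp add: R_def c_def t_def sum_divide_distrib)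
    show "AE x in \<pi>. 0 \<le> R x"
      using t by (intro AE_I2) (simp add: R_def c_def less_imp_le sum_nonneg)
  qed
  also have "integral\<^sup>L \<pi> R = (\<Sum>j<N. integral\<^sup>L \<pi> (\<lambda>x. c j * indicator (cball 0 (sqrt (t j))) x))"
    unfolding R_def by (intro Bochner_Integration.integral_sum integrable_mult_right ball)
  also have "\<dots> = (\<Sum>j<N. c j * measure \<pi> (cball 0 (sqrt (t j))))"
    using measure_cball_le(1)[OF assms(1)] t by (simp add: less_imp_le)
  also have "\<dots> \<le> (\<Sum>j<N. c j * (small_ball_const \<nu> \<theta> * sqrt (t j)))"
    using measure_cball_le(2)[OF assms(1)] t by (intro sum_mono mult_left_mono) (auto simp: c_def less_imp_le)
  also have "\<dots> = (\<Sum>j<N. 4 * M^2 * small_ball_const \<nu> \<theta> / (real N)^2)"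
    using t by (intro sum.cong refl) (simp add: c_def less_imp_neq[symmetric])
  also have "\<dots> = 4 * M^2 * small_ball_const \<nu> \<theta> / real N"
    using assms(4) by (simp add: power2_eq_square)
  finally show ?thesis .
qed

end

lemma nu_pos: "0 < \<kappa> i \<Longrightarrow> 0 < \<theta> i \<Longrightarrow> 0 < \<sigma> i \<Longrightarrow> 0 < nu \<kappa> \<theta> \<sigma> i"
  by (simp add: nu_def)

lemma Rplus_borel [measurable]: "Rplus \<in> sets borel"
  unfolding Rplus_def by (intro borel_closed closed_Collect_all closed_Collect_le continuous_intros)

lemma AE_gamma_prod_Rplus: "AE x in gamma_prod \<nu> \<theta>. x \<in> Rplus"
  unfolding gamma_prod_def
proof (subst AE_density)
  show "AE x in lborel. 0 < ennreal (indicator Rplus x * (\<Prod>i\<in>UNIV. (\<nu> i / \<theta> i) powr \<nu> i / Gamma (\<nu> i)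
      * (x $ i) powr (\<nu> i - 1) * exp (- \<nu> i * x $ i / \<theta> i))) \<longrightarrow> x \<in> Rplus"
    by (rule AE_I2) (simp split: split_indicator)
qed measurable

lemma CIR_form_nonneg: "0 \<le> CIR_form \<kappa> \<theta> \<sigma> g"
  unfolding CIR_form_def
proof (intro mult_nonneg_nonneg sum_nonneg integral_nonneg_AE)
  show "AE x in gamma_prod (nu \<kappa> \<theta> \<sigma>) \<theta>. 0 \<le> x $ i * (pderiv_i g i x)^2" for i
    using AE_gamma_prod_Rplus by eventually_elim (simp add: Rplus_def)
qed auto

lemma CIR_form_zero: "CIR_form \<kappa> \<theta> \<sigma> (\<lambda>x. 0) = 0"
  by (simp add: CIR_form_def pderiv_i_def)

lemma cap_open_nonneg: "0 \<le> cap_open \<kappa> \<theta> \<sigma> U"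
  unfolding cap_open_def Let_def
proof (rule Inf_greatest, clarify)
  fix c g f
  assume lim: "(\<lambda>k. CIR_form \<kappa> \<theta> \<sigma> (g k) + integral\<^sup>L (gamma_prod (nu \<kappa> \<theta> \<sigma>) \<theta>) (\<lambda>x. (g k x)^2))
    \<longlonglongrightarrow> c"
  have "0 \<le> c"
    using CIR_form_nonneg
    by (intro LIMSEQ_le_const[OF lim] exI allI impI add_nonneg_nonneg integral_nonneg_AE) auto
  then show "0 \<le> ereal c" by simp
qed

lemma cap_open_le_test_fun:
  assumes g: "test_fun g" and sq: "integrable (gamma_prod (nu \<kappa> \<theta> \<sigma>) \<theta>) (\<lambda>x. (g x)^2)"
    and ge: "\<And>x. x \<in> U \<Longrightarrow> 1 \<le> g x"
  shows "cap_open \<kappa> \<theta> \<sigma> U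
    \<le> ereal (CIR_form \<kappa> \<theta> \<sigma> g + integral\<^sup>L (gamma_prod (nu \<kappa> \<theta> \<sigma>) \<theta>) (\<lambda>x. (g x)^2))"
  unfolding cap_open_def Let_def
proof (rule Inf_lower, simp only: mem_Collect_eq, intro exI[of _ "\<lambda>_. g"] exI[of _ g] conjI exI refl)
  have "continuous_on UNIV g"
    using g Ck_imp_continuous_on[of 0 g] by (simp add: test_fun_def smooth_def)
  then show "g \<in> borel_measurable (gamma_prod (nu \<kappa> \<theta> \<sigma>) \<theta>)"
    by (subst measurable_cong_sets[OF sets_gamma_prod refl]) (rule borel_measurable_continuous_onI)
qed (use g sq ge in \<open>auto simp: CIR_form_zero intro: tendsto_const\<close>)

lemma cap_le_cap_open:
  "openin (top_of_set Rplus) U \<Longrightarrow> B \<subseteq> U \<Longrightarrow> cap \<kappa> \<theta> \<sigma> B \<le> cap_open \<kappa> \<theta> \<sigma> U"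
  unfolding cap_def by (rule Inf_lower) blast

lemma polar_if_cap_le_tendsto_0:
  assumes "\<And>N. cap \<kappa> \<theta> \<sigma> B \<le> ereal (a N)" and "a \<longlonglongrightarrow> 0"
  shows "polar \<kappa> \<theta> \<sigma> B"
proof -
  have "0 \<le> cap \<kappa> \<theta> \<sigma> B"
    unfolding cap_def by (rule Inf_greatest) (use cap_open_nonneg in blast)
  moreover have "cap \<kappa> \<theta> \<sigma> B \<le> ereal 0"
    using assms
    by (intro tendsto_le[OF trivial_limit_sequentially _ tendsto_const, of "\<lambda>N. ereal (a N)"])
       (auto intro: tendsto_ereal)
  ultimately show ?thesis
    by (simp add: polar_def zero_ereal_def)
qed

lemma cap_origin_le:
  fixes \<kappa> \<theta> \<sigma> :: "'n::finite \<Rightarrow> real"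
  assumes pos: "\<forall>i. \<kappa> i > 0" "\<forall>i. \<theta> i > 0" "\<forall>i. \<sigma> i > 0"
    and \<nu>: "1 \<le> (\<Sum>i\<in>UNIV. nu \<kappa> \<theta> \<sigma> i)" and M: "\<And>s. \<bar>cutoff' s\<bar> \<le> M"
    and \<tau>: "0 < \<tau>" "\<tau> \<le> 1" and N: "0 < N"
  defines "C \<equiv> small_ball_const (nu \<kappa> \<theta> \<sigma>) \<theta>"
  shows "cap \<kappa> \<theta> \<sigma> {0 :: real^'n}
    \<le> ereal (2 * M^2 * C * (\<Sum>i\<in>UNIV. (\<sigma> i)^2) / real N + C * sqrt \<tau>)"
proof -
  interpret gamma_product "nu \<kappa> \<theta> \<sigma>" \<theta>
    using pos by unfold_locales (auto intro: nu_pos)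
  define G :: "real^'n \<Rightarrow> real" where "G = averaged_cutoff \<tau> N"
  define U where "U = Rplus \<inter> ball (0::real^'n) (sqrt (\<tau> / 8^(N - 1)) / 2)"
  have "cap \<kappa> \<theta> \<sigma> {0} \<le> cap_open \<kappa> \<theta> \<sigma> U"
    using \<tau> by (intro cap_le_cap_open) (auto simp: U_def Rplus_def intro: openin_open_Int)
  also have "\<dots> \<le> ereal (CIR_form \<kappa> \<theta> \<sigma> G + integral\<^sup>L \<pi> (\<lambda>x. (G x)^2))"
  proof (rule cap_open_le_test_fun)
    show "test_fun G" unfolding G_def by (rule test_fun_averaged_cutoff[OF \<tau>(1)])
    show "integrable \<pi> (\<lambda>x. (G x)^2)"
      unfolding G_def by (rule averaged_cutoff_sq_integral_le(1)[OF \<nu> \<tau>])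
    show "1 \<le> G x" if "x \<in> U" for x
    proof -
      have "(norm x)^2 \<le> (sqrt (\<tau> / 8^(N - 1)) / 2)^2"
        using that by (intro power_mono) (auto simp: U_def)
      then show ?thesis
        using \<tau>(1) N by (simp add: G_def averaged_cutoff_eq_1 power2_norm_eq_inner power_divide)
    qed
  qed
  also have "CIR_form \<kappa> \<theta> \<sigma> G \<le> 1/2 * (\<Sum>i\<in>UNIV. (\<sigma> i)^2 * (4 * M^2 * C / real N))"
    unfolding CIR_form_def G_def C_def
    using averaged_cutoff_energy_integral_le[OF \<nu> \<tau> N M]
    by (intro mult_left_mono sum_mono) auto
  also have "1/2 * (\<Sum>i\<in>UNIV. (\<sigma> i)^2 * (4 * M^2 * C / real N))
      = 2 * M^2 * C * (\<Sum>i\<in>UNIV. (\<sigma> i)^2) / real N"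
    by (simp only: sum_distrib_right[symmetric]) (simp add: field_simps)
  also have "integral\<^sup>L \<pi> (\<lambda>x. (G x)^2) \<le> C * sqrt \<tau>"
    unfolding G_def C_def by (rule averaged_cutoff_sq_integral_le(2)[OF \<nu> \<tau>])
  finally show ?thesis
    by simp
qed

theorem proposition3:
  fixes \<kappa> \<theta> \<sigma> :: "'n::finite \<Rightarrow> real"
  assumes "\<forall>i. \<kappa> i > 0" and "\<forall>i. \<theta> i > 0" and "\<forall>i. \<sigma> i > 0"
    and "(\<Sum>i\<in>UNIV. nu \<kappa> \<theta> \<sigma> i) \<ge> 1"
  shows "polar \<kappa> \<theta> \<sigma> {0 :: real ^ 'n}"
proof -
  obtain M where M: "\<And>s. \<bar>cutoff' s\<bar> \<le> M"
    using cutoff'_bounded by blast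
  define C where "C = small_ball_const (nu \<kappa> \<theta> \<sigma>) \<theta>"
  define K where "K = 2 * M^2 * C * (\<Sum>i\<in>UNIV. (\<sigma> i)^2)"
  define a where "a N = K / real (Suc N) + C * sqrt (1 / real (Suc N))" for N
  show ?thesis
  proof (rule polar_if_cap_le_tendsto_0)
    show "cap \<kappa> \<theta> \<sigma> {0} \<le> ereal (a N)" for N
      using cap_origin_le[OF assms M, of "1 / real (Suc N)" "Suc N"]
      by (simp add: a_def C_def K_def)
    have "(\<lambda>N. 1 / real (Suc N)) \<longlonglongrightarrow> 0"
      using LIMSEQ_inverse_real_of_nat by (simp add: inverse_eq_divide)
    then have "(\<lambda>N. K * (1 / real (Suc N)) + C * sqrt (1 / real (Suc N))) \<longlonglongrightarrow> K * 0 + C * sqrt 0"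
      by (intro tendsto_intros)
    then show "a \<longlonglongrightarrow> 0"
      by (simp add: a_def[abs_def])
  qed
qed

end
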